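(* Let $G_1$ and $G_2$ be two vertex-disjoint 2-edge-colored graphs with Hamiltonian alternating cycles $C_1=x_0x_1\cdots x_{2n-1}x_0$ and $C_2=y_0y_1\cdots y_{2m-1}y_0$, respectively, and let $G\in G_1\oplus G_2$. Suppose there is no good pair in $G$ (between $C_1$ and $C_2$), and that for each $i\in\{1,2\}$ there is a vertex of $C_i$ which is non-singular with respect to $C_{3-i}$. Then there exist $r\in[0,2m-1]$ and $s\in[0,2n-1]$ such that $x_0y_ry_{r+1}y_{r+2}x_0$ and $y_0x_sx_{s+1}x_{s+2}y_0$ are alternating 4-cycles (subscripts of $x$ taken modulo $2n$, of $y$ modulo $2m$).
   Context: All graphs are simple, with edges colored red or blue. An alternating cycle is a cycle in which consecutive edges have different colors; a Hamiltonian alternating cycle of a graph is an alternating cycle through all its vertices. For vertex-disjoint 2-edge-colored graphs $G_1,G_2$, the colored generalized sum $G_1\oplus G_2$ is the set of 2-edge-colored graphs $G$ with $V(G)=V(G_1)\cup V(G_2)$, $G\langle V(G_i)\rangle=G_i$ with the same coloring, and exactly one edge (of arbitrary fixed color) between each $u\in V(G_1)$ and $w\in V(G_2)$; these latter edges are the exterior edges. For $v$ on an alternating cycle $C$, $v^r$ (resp. $v^b$) is the neighbor of $v$ on $C$ with $vv^r$ red (resp. $vv^b$ blue). For an exterior edge $vw$ with $v\in V(C_1)$, $w\in V(C_2)$: if $vw$ is red, $vw,v^rw^r$ is a good pair if $v^rw^r$ is red; if $vw$ is blue, $vw,v^bw^b$ is a good pair if $v^bw^b$ is blue. A vertex $v\in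 V(C_i)$ is red-singular (blue-singular) with respect to $C_{3-i}$ if all edges between $v$ and $V(C_{3-i})$ are red (blue); it is singular if red- or blue-singular, and non-singular otherwise (i.e. it is incident with exterior edges of both colors towards $C_{3-i}$). *)

theory Defs
  imports Main
begin

datatype color = Red | Blue

text \<open>A 2-edge-colored simple graph: a vertex set and a symmetric, loopless partial
  colouring of pairs; ecol G u v = None means u and v are non-adjacent.\<close>
record 'a cgraph =
  verts :: "'a set"
  ecol  :: "'a \<Rightarrow> 'a \<Rightarrow> color option"

definition cgraph :: "'a cgraph \<Rightarrow> bool" where
  "cgraph G \<longleftrightarrow> finite (verts G)
     \<and> (\<forall>u v. ecol G u v = ecol G v u)
     \<and> (\<forall>u. ecol G u u = None)
     \<and> (\<forall>u v. ecol G u v \<noteq> None \<longrightarrow> u \<in> verts G \<and> v \<in> verts G)"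

definition induced :: "'a cgraph \<Rightarrow> 'a set \<Rightarrow> 'a cgraph" where
  "induced G S = \<lparr>verts = S, ecol = (\<lambda>u v. if u \<in> S \<and> v \<in> S then ecol G u v else None)\<rparr>"

definition cgsum :: "'a cgraph \<Rightarrow> 'a cgraph \<Rightarrow> 'a cgraph set" where
  "cgsum G1 G2 = {G. cgraph G \<and> verts G = verts G1 \<union> verts G2
      \<and> induced G (verts G1) = G1 \<and> induced G (verts G2) = G2
      \<and> (\<forall>u\<in>verts G1. \<forall>w\<in>verts G2. ecol G u w \<noteq> None)}"

definition alt_cycle :: "'a cgraph \<Rightarrow> 'a list \<Rightarrow> bool" where
  "alt_cycle G xs \<longleftrightarrow> (let k = length xs in k \<ge> 3 \<and> distinct xs
     \<and> (\<forall>i<k. ecol G (xs!i) (xs!((i+1) mod k)) \<noteq> None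
          \<and> ecol G (xs!i) (xs!((i+1) mod k)) \<noteq> ecol G (xs!((i+1) mod k)) (xs!((i+2) mod k))))"

definition ham_alt_cycle :: "'a cgraph \<Rightarrow> 'a list \<Rightarrow> bool" where
  "ham_alt_cycle G xs \<longleftrightarrow> alt_cycle G xs \<and> set xs = verts G"

text \<open>cyc_nbr G xs c v u: u is the neighbour v^c of v on the cycle xs
  (the cycle neighbour joined to v by an edge of colour c).\<close>
definition cyc_nbr :: "'a cgraph \<Rightarrow> 'a list \<Rightarrow> color \<Rightarrow> 'a \<Rightarrow> 'a \<Rightarrow> bool" where
  "cyc_nbr G xs c v u \<longleftrightarrow> (let k = length xs in \<exists>i<k. xs!i = v
     \<and> (u = xs!((i+1) mod k) \<or> u = xs!((i+k-1) mod k)) \<and> ecol G v u = Some c)"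

definition has_good_pair :: "'a cgraph \<Rightarrow> 'a list \<Rightarrow> 'a list \<Rightarrow> bool" where
  "has_good_pair G C1 C2 \<longleftrightarrow> (\<exists>v\<in>set C1. \<exists>w\<in>set C2. \<exists>c v' w'.
     ecol G v w = Some c \<and> cyc_nbr G C1 c v v' \<and> cyc_nbr G C2 c w w'
     \<and> ecol G v' w' = Some c)"

definition red_singular :: "'a cgraph \<Rightarrow> 'a \<Rightarrow> 'a set \<Rightarrow> bool" where
  "red_singular G v W \<longleftrightarrow> (\<forall>w\<in>W. ecol G v w = Some Red)"

definition blue_singular :: "'a cgraph \<Rightarrow> 'a \<Rightarrow> 'a set \<Rightarrow> bool" where
  "blue_singular G v W \<longleftrightarrow> (\<forall>w\<in>W. ecol G v w = Some Blue)"

definition singular :: "'a cgraph \<Rightarrow> 'a \<Rightarrow> 'a set \<Rightarrow> bool" where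
  "singular G v W \<longleftrightarrow> red_singular G v W \<or> blue_singular G v W"

end

theory Submission
  imports Defs
begin

text \<open>Index both cycles periodically by the integers and write col i j for the colour of the
  exterior edge x_i y_j. If col i j = c, the absence of good pairs says that the exterior edge
  between the c-neighbours of x_i and y_j has the other colour. Iterating, the walk that keeps
  moving to the current-colour neighbours on both cycles never changes direction and flips the
  colour at every step; as both cycles are even and everything is periodic, such walks reach every
  row from row 0.

  Suppose no r makes x_0 y_r y_(r+1) y_(r+2) an alternating 4-cycle. Then the set of j for which
  x_0 y_j has the colour of y_j y_(j+1) is closed under j + 2 \<mapsto> j, so by periodicity it depends
  only on the parity of j. Either row 0 alternates in step with C_2, and then the walks make every
  column constant, so every vertex of C_2 is singular; or row 0 is constant, and then every row is
  constant, so every vertex of C_1 is singular. The statement for y_0 follows by symmetry.\<close>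

fun flip_color :: "color \<Rightarrow> color" where
  "flip_color Red = Blue"
| "flip_color Blue = Red"

lemma flip_color_neq [simp]: "flip_color c \<noteq> c" "c \<noteq> flip_color c"
  by (cases c; simp)+

lemma flip_color_flip_color [simp]: "flip_color (flip_color c) = c"
  by (cases c) simp_all

lemma flip_color_inject [simp]: "flip_color a = flip_color b \<longleftrightarrow> a = b"
  by (cases a; cases b) simp_all

lemma neq_imp_eq_flip_color: "a \<noteq> c \<Longrightarrow> a = flip_color c"
  by (cases a; cases c) simp_all

definition parity_flip :: "int \<Rightarrow> color \<Rightarrow> color" where
  "parity_flip k c = (if even k then c else flip_color c)"

lemma parity_flip_parity_flip [simp]: "parity_flip k (parity_flip k c) = c"
  by (simp add: parity_flip_def)

definition alternating :: "(int \<Rightarrow> color) \<Rightarrow> bool" where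
  "alternating e \<longleftrightarrow> (\<forall>i. e (i + 1) = flip_color (e i))"

lemma alternating_add:
  assumes "alternating e"
  shows "e (i + k) = parity_flip k (e i)"
proof (induction k rule: int_induct[where k = 0])
  case base
  then show ?case by (simp add: parity_flip_def)
next
  case (step1 k)
  then show ?case
    using assms[unfolded alternating_def, rule_format, of "i + k"]
    by (simp add: parity_flip_def add.assoc)
next
  case (step2 k)
  then show ?case
    using assms[unfolded alternating_def, rule_format, of "i + (k - 1)"]
    by (auto simp: parity_flip_def)
qed

lemma alternating_diff:
  assumes "alternating e"
  shows "e (i - k) = parity_flip k (e i)"
  using alternating_add[OF assms, of "i - k" k] by simp

text \<open>On a cycle whose edge from position i to i + 1 has colour e i, the neighbour
  of position i joined to it by colour c sits at position i + nbr_dir e i c.\<close>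
definition nbr_dir :: "(int \<Rightarrow> color) \<Rightarrow> int \<Rightarrow> color \<Rightarrow> int" where
  "nbr_dir e i c = (if e i = c then 1 else -1)"

lemma odd_nbr_dir [simp]: "odd (nbr_dir e i c)"
  by (simp add: nbr_dir_def)

lemma nbr_dir_mult_self [simp]: "nbr_dir e i c * nbr_dir e i c = 1"
  by (simp add: nbr_dir_def)

lemma nbr_dir_along_walk:
  assumes "alternating e"
  shows "nbr_dir e (i + k * nbr_dir e i c) (parity_flip k c) = nbr_dir e i c"
proof (cases "e i = c")
  case True
  then show ?thesis using alternating_add[OF assms, of i k] by (simp add: nbr_dir_def)
next
  case False
  then have "e i = flip_color c" by (rule neq_imp_eq_flip_color)
  then show ?thesis
    using False alternating_diff[OF assms, of i k] by (auto simp: nbr_dir_def parity_flip_def)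
qed

lemma periodic_downclosed_const:
  fixes P :: "int \<Rightarrow> bool"
  assumes down: "\<And>k. P (k + 1) \<Longrightarrow> P k" and periodic: "\<And>k. P (k + p) = P k" and "0 < p"
  shows "P a = P b"
proof -
  have below: "P k \<Longrightarrow> P l" if "l \<le> k" for k l
    using that
  proof (induction l rule: int_induct[where k = k])
    case (step2 l)
    then show ?case using down[of "l - 1"] by simp
  qed auto
  have shift: "P (k + int q * p) = P k" for k q
  proof (induction q)
    case (Suc q)
    have "k + int (Suc q) * p = (k + int q * p) + p"
      by (simp add: algebra_simps)
    then show ?case using periodic[of "k + int q * p"] Suc.IH by (simp add: add.assoc)
  qed simp
  have "P k \<Longrightarrow> P l" for k l
  proof -
    define q where "q = nat \<bar>l - k\<bar>"
    have "int q * 1 \<le> int q * p"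
      using \<open>0 < p\<close> by (intro mult_left_mono) simp_all
    then have "l \<le> k + int q * p"
      unfolding q_def by linarith
    then show "P k \<Longrightarrow> P l" using below shift by blast
  qed
  then show ?thesis by blast
qed

text \<open>col i j is the colour of the exterior edge x_i y_j, and e i, d j are the colours of the
  cycle edges x_i x_(i+1) and y_j y_(j+1).\<close>
locale good_pair_free =
  fixes col :: "int \<Rightarrow> int \<Rightarrow> color" and e d :: "int \<Rightarrow> color"
  assumes alternating_e: "alternating e" and alternating_d: "alternating d"
    and no_good_pair:
      "\<And>i j. col (i + nbr_dir e i (col i j)) (j + nbr_dir d j (col i j)) \<noteq> col i j"
begin

text \<open>Moving simultaneously to the c-neighbours on both cycles never returns the colour c,
  and by nbr_dir_along_walk the two directions stay fixed along the way.\<close>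
lemma col_diagonal_walk:
  assumes "col i j = c"
  shows "col (i + int k * nbr_dir e i c) (j + int k * nbr_dir d j c) = parity_flip (int k) c"
proof (induction k)
  case 0
  then show ?case using assms by (simp add: parity_flip_def)
next
  case (Suc k)
  define s t where "s = nbr_dir e i c" and "t = nbr_dir d j c"
  define c' where "c' = parity_flip (int k) c"
  have "nbr_dir e (i + int k * s) c' = s" "nbr_dir d (j + int k * t) c' = t"
    unfolding s_def t_def c'_def using alternating_e alternating_d
    by (simp_all add: nbr_dir_along_walk)
  then have "col (i + int k * s + s) (j + int k * t + t) \<noteq> c'"
    using no_good_pair[of "i + int k * s" "j + int k * t"] Suc.IH by (simp add: s_def t_def c'_def)
  then have "col (i + int k * s + s) (j + int k * t + t) = flip_color c'"
    by (rule neq_imp_eq_flip_color)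
  then show ?case
    by (simp add: s_def t_def c'_def parity_flip_def algebra_simps)
qed

end

locale periodic_good_pair_free = good_pair_free +
  fixes N M :: int
  assumes N_pos: "0 < N" and M_pos: "0 < M" and even_N: "even N" and even_M: "even M"
    and col_mod: "\<And>i j. col (i mod N) (j mod M) = col i j"
begin

lemma even_mod_N_iff [simp]: "even (a mod N) \<longleftrightarrow> even a"
  using dvd_mod_iff[OF even_N] .

lemma col_from_row0:
  assumes "col 0 j = c"
  shows "col i (j + ((nbr_dir e 0 c * i) mod N) * nbr_dir d j c) = parity_flip i c"
proof -
  define s t where "s = nbr_dir e 0 c" and "t = nbr_dir d j c"
  define k where "k = (s * i) mod N"
  have "k \<ge> 0" unfolding k_def using N_pos by simp
  then have "col (int (nat k) * s) (j + int (nat k) * t) = parity_flip (int (nat k)) c"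
    using col_diagonal_walk[OF assms, of "nat k"] by (simp add: s_def t_def)
  moreover have "(k * s) mod N = i mod N"
  proof -
    have "(k * s) mod N = (s * i * s) mod N" unfolding k_def by (simp add: mod_mult_left_eq)
    also have "s * i * s = i" by (simp add: s_def t_def algebra_simps)
    finally show ?thesis .
  qed
  then have "col (k * s) (j + k * t) = col i (j + k * t)"
    using col_mod[of "k * s"] col_mod[of i] by metis
  moreover have "even k \<longleftrightarrow> even i" unfolding k_def by (simp add: s_def t_def)
  ultimately show ?thesis
    using \<open>k \<ge> 0\<close> by (simp add: k_def s_def t_def parity_flip_def)
qed

lemma col_eq_row0_if_nbr_dir_const:
  assumes const: "\<And>j. nbr_dir d j (col 0 j) = t"
  shows "col i j = col 0 j"
proof -
  have row0: "col 0 j = (if t = 1 then d j else flip_color (d j))" for j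
    using const[of j] neq_imp_eq_flip_color[of "col 0 j" "d j"]
    by (cases "d j = col 0 j") (auto simp: nbr_dir_def)
  have "alternating (col 0)"
    using alternating_d unfolding alternating_def row0 by simp
  note row0_diff = alternating_diff[OF this]
  have "odd t" using const[of 0] odd_nbr_dir by metis
  define c where "c = col 0 (j - (i mod N) * t)"
  define k where "k = (nbr_dir e 0 c * i) mod N"
  have "even (k * t) \<longleftrightarrow> even i" "even ((i mod N) * t) \<longleftrightarrow> even i"
    using \<open>odd t\<close> by (simp_all add: k_def)
  then have c: "c = parity_flip i (col 0 j)" and start: "col 0 (j - k * t) = c"
    unfolding c_def row0_diff by (simp_all add: parity_flip_def)
  have "col i (j - k * t + k * nbr_dir d (j - k * t) c) = parity_flip i c"
    using col_from_row0[OF start, of i] by (simp add: k_def)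
  then show ?thesis
    using const[of "j - k * t"] by (simp add: start c)
qed

lemma col_parity_flip_if_row0_const:
  assumes const: "\<And>j. col 0 j = a"
  shows "col i j = parity_flip i a"
proof -
  define k where "k = (nbr_dir e 0 a * i) mod N"
  have "d (j + k) = d (j - k)"
    using alternating_add[OF alternating_d, of "j - k" "2 * k"]
    by (simp add: parity_flip_def add.commute)
  then consider "d (j - k) = a" | "d (j + k) \<noteq> a" by metis
  then show ?thesis
  proof cases
    case 1
    then show ?thesis
      using col_from_row0[OF const[of "j - k"], of i] by (simp add: k_def nbr_dir_def)
  next
    case 2
    then show ?thesis
      using col_from_row0[OF const[of "j + k"], of i] by (simp add: k_def nbr_dir_def)
  qed
qed

text \<open>The conclusion says that x_0 y_r y_(r+1) y_(r+2) is an alternating 4-cycle.\<close>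
lemma ex_row0_alternating_square:
  assumes row: "\<exists>i j j'. col i j \<noteq> col i j'" and column: "\<exists>j i i'. col i j \<noteq> col i' j"
  shows "\<exists>r. col 0 r = d (r + 1) \<and> col 0 (r + 2) = d r"
proof (rule ccontr)
  assume none: "\<not> ?thesis"
  define g where "g r \<longleftrightarrow> col 0 r = d r" for r
  have d_add: "d (r + k) = parity_flip k (d r)" for r k
    using alternating_add[OF alternating_d] .
  have down: "g (r + 2) \<Longrightarrow> g r" for r
  proof (rule ccontr)
    assume "g (r + 2)" "\<not> g r"
    then have "col 0 r = d (r + 1) \<and> col 0 (r + 2) = d r"
      using d_add[of r 1] d_add[of r 2] neq_imp_eq_flip_color[of "col 0 r" "d r"]
      by (simp add: g_def parity_flip_def)
    then show False using none by blast
  qed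
  have periodic: "g (r + M) = g r" for r
    using col_mod[of 0 "r + M"] col_mod[of 0 r] d_add[of r M] even_M
    by (simp add: g_def parity_flip_def)
  have g_shift: "g (r + 2 * k) = g r" for r k
  proof -
    have "g (r + 2 * k) = g (r + 2 * 0)"
    proof (rule periodic_downclosed_const[where P = "\<lambda>k. g (r + 2 * k)" and p = "M div 2"])
      show "g (r + 2 * (l + 1)) \<Longrightarrow> g (r + 2 * l)" for l
        using down[of "r + 2 * l"] by (simp add: algebra_simps)
      show "g (r + 2 * (l + M div 2)) = g (r + 2 * l)" for l
        using periodic[of "r + 2 * l"] even_M by (simp add: algebra_simps)
      show "0 < M div 2"
        using M_pos even_M by auto
    qed
    then show ?thesis by simp
  qed
  have g_parity: "g r = (if even r then g 0 else g 1)" for r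
    using g_shift[of "r mod 2" "r div 2"]
    by (cases "even r") (simp_all add: even_iff_mod_2_eq_zero odd_iff_mod_2_eq_one)
  show False
  proof (cases "g 0 = g 1")
    case True
    then have g_const: "g j = g 0" for j
      using g_parity[of j] by simp
    have "nbr_dir d j (col 0 j) = (if g 0 then 1 else -1)" for j
      using g_const[of j] by (auto simp: g_def nbr_dir_def)
    then have "col i j = col 0 j" for i j
      by (rule col_eq_row0_if_nbr_dir_const)
    then show False using column by metis
  next
    case False
    define a where "a = (if g 0 then d 0 else flip_color (d 0))"
    have g_alt: "g j \<longleftrightarrow> (even j \<longleftrightarrow> g 0)" for j
      using g_parity[of j] False by auto
    have "col 0 j = a" for j
      using g_alt[of j] d_add[of 0 j] neq_imp_eq_flip_color[of "col 0 j" "d j"]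
      by (cases "even j"; cases "g 0") (auto simp: g_def a_def parity_flip_def)
    then have "col i j = parity_flip i a" for i j
      by (rule col_parity_flip_if_row0_const)
    then show False using row by metis
  qed
qed

lemma transpose: "periodic_good_pair_free (\<lambda>i j. col j i) d e M N"
  by unfold_locales
    (use alternating_d alternating_e no_good_pair M_pos N_pos even_M even_N col_mod in auto)

lemma ex_column0_alternating_square:
  assumes "\<exists>i j j'. col i j \<noteq> col i j'" and "\<exists>j i i'. col i j \<noteq> col i' j"
  shows "\<exists>s. col s 0 = e (s + 1) \<and> col (s + 2) 0 = e s"
  using periodic_good_pair_free.ex_row0_alternating_square[OF transpose] assms by blast

end

lemma alt_cycle_4I:
  assumes "distinct [a, b, c, d]"
    and "ecol G a b = Some p" "ecol G b c = Some q" "ecol G c d = Some r" "ecol G d a = Some s"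
    and "p \<noteq> q" "q \<noteq> r" "r \<noteq> s" "s \<noteq> p"
  shows "alt_cycle G [a, b, c, d]"
proof -
  have all_less_4: "(\<forall>i<4. Q i) \<longleftrightarrow> Q 0 \<and> Q 1 \<and> Q 2 \<and> Q 3"
    for Q :: "nat \<Rightarrow> bool"
    by (auto simp: less_Suc_eq numeral_eq_Suc)
  have "length [a, b, c, d] = 4"
    by simp
  then show ?thesis
    using assms unfolding alt_cycle_def Let_def by (simp only: all_less_4) simp
qed

lemma not_singular_two_colours:
  assumes "\<not> singular G v W" and "\<forall>w\<in>W. ecol G v w \<noteq> None"
  shows "\<exists>w\<in>W. \<exists>w'\<in>W. ecol G v w \<noteq> ecol G v w'"
proof -
  obtain w w' where "w \<in> W" "w' \<in> W" "ecol G v w \<noteq> Some Red" "ecol G v w' \<noteq> Some Blue"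
    using assms(1) unfolding singular_def red_singular_def blue_singular_def by blast
  then show ?thesis
    using assms(2) color.exhaust by (metis option.exhaust)
qed

lemma add_mod_neq_mod:
  fixes i k N :: int
  assumes "0 < k" "k < N"
  shows "(i + k) mod N \<noteq> i mod N"
proof
  assume "(i + k) mod N = i mod N"
  then have "N dvd (i + k) - i"
    by (simp add: mod_eq_dvd_iff)
  then have "N \<le> k"
    using assms by (simp add: zdvd_imp_le)
  then show False
    using assms by simp
qed

locale indexed_ham_cycle =
  fixes G :: "'a cgraph" and V :: "'a set" and x :: "nat \<Rightarrow> 'a" and N :: nat
  assumes cgraph: "cgraph G" and ham: "ham_alt_cycle (induced G V) (map x [0..<N])"
begin

definition X :: "int \<Rightarrow> 'a" where
  "X i = x (nat (i mod int N))"

lemma alt_cycle: "alt_cycle (induced G V) (map x [0..<N])"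
  and set_cycle: "set (map x [0..<N]) = V"
  using ham by (auto simp: ham_alt_cycle_def induced_def)

lemma length_ge_3: "3 \<le> N"
  using alt_cycle by (simp add: alt_cycle_def)

lemma length_pos: "0 < N"
  using length_ge_3 by simp

lemma index_less: "nat (i mod int N) < N"
  using length_ge_3 by (simp add: nat_less_iff)

lemma nth_cycle: "map x [0..<N] ! ((nat (i mod int N) + k) mod N) = X (i + int k)"
proof -
  have "(i + int k) mod int N = (i mod int N + int k) mod int N"
    by (simp add: mod_add_left_eq)
  moreover have "0 \<le> i mod int N"
    using length_ge_3 by simp
  ultimately have "nat ((i + int k) mod int N) = (nat (i mod int N) + k) mod N"
    using length_ge_3 by (simp add: nat_mod_distrib nat_add_distrib)
  then show ?thesis
    using length_ge_3 by (simp add: X_def)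
qed

lemma X_mod_eq: "i mod int N = j mod int N \<Longrightarrow> X i = X j"
  by (simp add: X_def)

lemma X_in: "X i \<in> V"
  using set_cycle index_less by (auto simp: X_def)

lemma set_cycle_eq_range_X: "set (map x [0..<N]) = range X"
proof
  show "set (map x [0..<N]) \<subseteq> range X"
  proof
    fix v
    assume "v \<in> set (map x [0..<N])"
    then obtain a where "a < N" "v = x a"
      by auto
    then have "v = X (int a)"
      by (simp add: X_def)
    then show "v \<in> range X"
      by simp
  qed
  show "range X \<subseteq> set (map x [0..<N])"
    using index_less by (auto simp: X_def)
qed

lemma nth_cycle_index: "map x [0..<N] ! nat (i mod int N) = X i"
  using index_less by (simp add: X_def)

lemma X_eq_iff: "X i = X j \<longleftrightarrow> i mod int N = j mod int N"
proof
  assume "X i = X j"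
  moreover have "inj_on x {0..<N}"
    using alt_cycle by (simp add: alt_cycle_def distinct_map)
  ultimately have "nat (i mod int N) = nat (j mod int N)"
    using index_less by (auto simp: X_def dest: inj_onD)
  then show "i mod int N = j mod int N"
    using length_pos by (simp add: eq_nat_nat_iff)
qed (rule X_mod_eq)

lemma ecol_commute: "ecol G u v = ecol G v u"
  using cgraph by (simp add: cgraph_def)

lemma cycle_edge:
  "ecol G (X i) (X (i + 1)) \<noteq> None
    \<and> ecol G (X i) (X (i + 1)) \<noteq> ecol G (X (i + 1)) (X (i + 2))"
proof -
  define a where "a = nat (i mod int N)"
  have "a < N" and X: "X i = x a" "X (i + 1) = x ((a + 1) mod N)" "X (i + 2) = x ((a + 2) mod N)"
    using index_less nth_cycle[of i 1] nth_cycle[of i 2] length_pos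
    by (simp_all add: a_def X_def)
  then have "ecol (induced G V) (X i) (X (i + 1)) \<noteq> None
      \<and> ecol (induced G V) (X i) (X (i + 1)) \<noteq> ecol (induced G V) (X (i + 1)) (X (i + 2))"
    using alt_cycle unfolding alt_cycle_def Let_def X by simp
  then show ?thesis
    using X_in by (simp add: induced_def)
qed

definition edge_col :: "int \<Rightarrow> color" where
  "edge_col i = the (ecol G (X i) (X (i + 1)))"

lemma ecol_edge_col: "ecol G (X i) (X (i + 1)) = Some (edge_col i)"
  using cycle_edge[of i] by (auto simp: edge_col_def)

lemma alternating_edge_col: "alternating edge_col"
  unfolding alternating_def
proof
  fix i
  have "ecol G (X (i + 1)) (X (i + 2)) = Some (edge_col (i + 1))"
    using ecol_edge_col[of "i + 1"] by (simp add: add.assoc)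
  then have "edge_col (i + 1) \<noteq> edge_col i"
    using cycle_edge[of i] ecol_edge_col[of i] by auto
  then show "edge_col (i + 1) = flip_color (edge_col i)"
    by (rule neq_imp_eq_flip_color)
qed

lemma even_length: "even N"
proof -
  have "X (int N) = X 0" "X (int N + 1) = X 1"
    by (intro X_mod_eq; simp)+
  then have "edge_col (0 + int N) = edge_col 0"
    by (simp add: edge_col_def)
  then show ?thesis
    using alternating_add[OF alternating_edge_col, of 0 "int N"]
    by (cases "even N") (simp_all add: parity_flip_def)
qed

lemma cyc_nbr_X: "cyc_nbr G (map x [0..<N]) c (X i) (X (i + nbr_dir edge_col i c))"
proof -
  define a where "a = nat (i mod int N)"
  have a: "a < N" "map x [0..<N] ! a = X i"
    unfolding a_def by (simp_all only: index_less nth_cycle_index)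
  have "ecol G (X i) (X (i + nbr_dir edge_col i c)) = Some c
    \<and> (X (i + nbr_dir edge_col i c) = map x [0..<N] ! ((a + 1) mod N)
      \<or> X (i + nbr_dir edge_col i c) = map x [0..<N] ! ((a + N - 1) mod N))"
  proof (cases "edge_col i = c")
    case True
    then show ?thesis
      using nth_cycle[of i 1] ecol_edge_col[of i] by (simp add: nbr_dir_def a_def)
  next
    case False
    have "edge_col i = flip_color (edge_col (i - 1))"
      using alternating_edge_col unfolding alternating_def by (metis diff_add_cancel)
    then have "ecol G (X i) (X (i - 1)) = Some c"
      using False ecol_edge_col[of "i - 1"] ecol_commute neq_imp_eq_flip_color[of c "edge_col i"]
      by auto
    moreover have "X (i + int (N - 1)) = X (i - 1)"
    proof (rule X_mod_eq)
      have "i + int (N - 1) = (i - 1) + int N"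
        using length_pos by simp
      then show "(i + int (N - 1)) mod int N = (i - 1) mod int N"
        by (simp only: mod_add_self2)
    qed
    ultimately show ?thesis
      using nth_cycle[of i "N - 1"] False length_pos by (simp add: nbr_dir_def a_def)
  qed
  then show ?thesis
    using a unfolding cyc_nbr_def Let_def by auto
qed

lemma X_distinct_3: "distinct [X r, X (r + 1), X (r + 2)]"
  using add_mod_neq_mod[of 1 "int N" r] add_mod_neq_mod[of 2 "int N" r]
    add_mod_neq_mod[of 1 "int N" "r + 1"] length_ge_3
  by (auto simp: X_eq_iff add.assoc)

lemma ex_alt_4cycle:
  assumes "u \<notin> V" and ecol_u: "\<And>j. ecol G u (X j) = Some (a j)"
    and "a r = edge_col (r + 1)" and "a (r + 2) = edge_col r"
  shows "\<exists>r'<N. alt_cycle G [u, x r', x ((r' + 1) mod N), x ((r' + 2) mod N)]"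
proof -
  define r' where "r' = nat (r mod int N)"
  have "r' < N"
    unfolding r'_def by (rule index_less)
  have X: "x r' = X r" "x ((r' + 1) mod N) = X (r + 1)" "x ((r' + 2) mod N) = X (r + 2)"
    using nth_cycle[of r 1] nth_cycle[of r 2] length_pos by (simp_all add: r'_def X_def)
  have alt: "edge_col (r + 1) = flip_color (edge_col r)"
    using alternating_edge_col by (simp add: alternating_def)
  have "alt_cycle G [u, X r, X (r + 1), X (r + 2)]"
  proof (rule alt_cycle_4I)
    show "distinct [u, X r, X (r + 1), X (r + 2)]"
      using \<open>u \<notin> V\<close> X_in X_distinct_3[of r] by auto
    show "ecol G u (X r) = Some (edge_col (r + 1))"
      using ecol_u[of r] assms(3) by simp
    show "ecol G (X r) (X (r + 1)) = Some (edge_col r)"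
      by (rule ecol_edge_col)
    show "ecol G (X (r + 1)) (X (r + 2)) = Some (edge_col (r + 1))"
      using ecol_edge_col[of "r + 1"] by (simp add: add.assoc)
    show "ecol G (X (r + 2)) u = Some (edge_col r)"
      using ecol_u[of "r + 2"] assms(4) ecol_commute by metis
  qed (simp_all add: alt)
  then show ?thesis
    using \<open>r' < N\<close> X by auto
qed

end

locale cgsum_ham_cycles =
  fixes G G1 G2 :: "'a cgraph" and x y :: "nat \<Rightarrow> 'a" and N M :: nat
  assumes sum: "G \<in> cgsum G1 G2" and disjoint: "verts G1 \<inter> verts G2 = {}"
    and ham1: "ham_alt_cycle G1 (map x [0..<N])" and ham2: "ham_alt_cycle G2 (map y [0..<M])"

sublocale cgsum_ham_cycles \<subseteq> C1: indexed_ham_cycle G "verts G1" x N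
  using sum ham1 by unfold_locales (simp_all add: cgsum_def)

sublocale cgsum_ham_cycles \<subseteq> C2: indexed_ham_cycle G "verts G2" y M
  using sum ham2 by unfold_locales (simp_all add: cgsum_def)

context cgsum_ham_cycles
begin

definition ext_col :: "int \<Rightarrow> int \<Rightarrow> color" where
  "ext_col i j = the (ecol G (C1.X i) (C2.X j))"

lemma ecol_ext_col: "ecol G (C1.X i) (C2.X j) = Some (ext_col i j)"
  using sum C1.X_in C2.X_in by (auto simp: cgsum_def ext_col_def)

lemma ecol_ext_col': "ecol G (C2.X j) (C1.X i) = Some (ext_col i j)"
  using ecol_ext_col C1.ecol_commute by metis

lemma periodic_good_pair_free_ext_col:
  assumes "\<not> has_good_pair G (map x [0..<N]) (map y [0..<M])"
  shows "periodic_good_pair_free ext_col C1.edge_col C2.edge_col (int N) (int M)"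
proof
  fix i j
  define c where "c = ext_col i j"
  define i' j' where "i' = i + nbr_dir C1.edge_col i c" and "j' = j + nbr_dir C2.edge_col j c"
  show "ext_col i' j' \<noteq> c"
  proof
    assume "ext_col i' j' = c"
    then have "ecol G (C1.X i) (C2.X j) = Some c" "ecol G (C1.X i') (C2.X j') = Some c"
      by (simp_all add: ecol_ext_col c_def)
    then have "has_good_pair G (map x [0..<N]) (map y [0..<M])"
      unfolding has_good_pair_def C1.set_cycle_eq_range_X C2.set_cycle_eq_range_X
      using C1.cyc_nbr_X[of c i, folded i'_def] C2.cyc_nbr_X[of c j, folded j'_def] by blast
    then show False
      using assms by simp
  qed
next
  show "ext_col (i mod int N) (j mod int M) = ext_col i j" for i j
    using C1.X_mod_eq[of "i mod int N" i] C2.X_mod_eq[of "j mod int M" j]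
    by (simp add: ext_col_def)
qed (simp_all add: C1.alternating_edge_col C2.alternating_edge_col C1.length_pos C2.length_pos
  C1.even_length C2.even_length)

lemma ext_col_row_nonconst:
  assumes "\<exists>v\<in>set (map x [0..<N]). \<not> singular G v (set (map y [0..<M]))"
  shows "\<exists>i j j'. ext_col i j \<noteq> ext_col i j'"
proof -
  obtain i where "\<not> singular G (C1.X i) (range C2.X)"
    using assms unfolding C1.set_cycle_eq_range_X C2.set_cycle_eq_range_X by blast
  then obtain j j' where "ecol G (C1.X i) (C2.X j) \<noteq> ecol G (C1.X i) (C2.X j')"
    using not_singular_two_colours[of G "C1.X i" "range C2.X"] ecol_ext_col by auto
  then show ?thesis
    unfolding ecol_ext_col by auto
qed

lemma ext_col_column_nonconst:
  assumes "\<exists>w\<in>set (map y [0..<M]). \<not> singular G w (set (map x [0..<N]))"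
  shows "\<exists>j i i'. ext_col i j \<noteq> ext_col i' j"
proof -
  obtain j where "\<not> singular G (C2.X j) (range C1.X)"
    using assms unfolding C1.set_cycle_eq_range_X C2.set_cycle_eq_range_X by blast
  then obtain i i' where "ecol G (C2.X j) (C1.X i) \<noteq> ecol G (C2.X j) (C1.X i')"
    using not_singular_two_colours[of G "C2.X j" "range C1.X"] ecol_ext_col' by auto
  then show ?thesis
    unfolding ecol_ext_col' by auto
qed

end

theorem lemma3p9:
  fixes G1 G2 G :: "'a cgraph" and x y :: "nat \<Rightarrow> 'a" and n m :: nat
  assumes "cgraph G1" and "cgraph G2"
    and "verts G1 \<inter> verts G2 = {}"
    and "ham_alt_cycle G1 (map x [0..<2*n])"
    and "ham_alt_cycle G2 (map y [0..<2*m])"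
    and "G \<in> cgsum G1 G2"
    and "\<not> has_good_pair G (map x [0..<2*n]) (map y [0..<2*m])"
    and "\<exists>v\<in>set (map x [0..<2*n]). \<not> singular G v (set (map y [0..<2*m]))"
    and "\<exists>w\<in>set (map y [0..<2*m]). \<not> singular G w (set (map x [0..<2*n]))"
  shows "\<exists>r<2*m. \<exists>s<2*n.
           alt_cycle G [x 0, y r, y ((r+1) mod (2*m)), y ((r+2) mod (2*m))]
         \<and> alt_cycle G [y 0, x s, x ((s+1) mod (2*n)), x ((s+2) mod (2*n))]"
proof -
  interpret cgsum_ham_cycles G G1 G2 x y "2 * n" "2 * m"
    using assms by unfold_locales
  interpret periodic_good_pair_free ext_col C1.edge_col C2.edge_col "int (2 * n)" "int (2 * m)"
    using assms(7) by (rule periodic_good_pair_free_ext_col)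
  have row: "\<exists>i j j'. ext_col i j \<noteq> ext_col i j'"
    using assms(8) by (rule ext_col_row_nonconst)
  have column: "\<exists>j i i'. ext_col i j \<noteq> ext_col i' j"
    using assms(9) by (rule ext_col_column_nonconst)
  obtain r where "ext_col 0 r = C2.edge_col (r + 1)" "ext_col 0 (r + 2) = C2.edge_col r"
    using ex_row0_alternating_square[OF row column] by blast
  then have "\<exists>r<2*m. alt_cycle G [C1.X 0, y r, y ((r+1) mod (2*m)), y ((r+2) mod (2*m))]"
    using disjoint C1.X_in ecol_ext_col
    by (intro C2.ex_alt_4cycle[where a = "ext_col 0" and r = r]) auto
  moreover obtain s where "ext_col s 0 = C1.edge_col (s + 1)" "ext_col (s + 2) 0 = C1.edge_col s"
    using ex_column0_alternating_square[OF row column] by blast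
  then have "\<exists>s<2*n. alt_cycle G [C2.X 0, x s, x ((s+1) mod (2*n)), x ((s+2) mod (2*n))]"
    using disjoint C2.X_in ecol_ext_col'
    by (intro C1.ex_alt_4cycle[where a = "\<lambda>i. ext_col i 0" and r = s]) auto
  moreover have "C1.X 0 = x 0" "C2.X 0 = y 0"
    by (simp_all add: C1.X_def C2.X_def)
  ultimately show ?thesis
    by auto
qed

end
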